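(* Let $\mathcal{X}$ be a measurable space, $\mathcal{Y}$ a finite set, $\varphi\colon\mathcal{Y}\to\mathbb{R}^p$, and $\rho$ a probability distribution on $\mathcal{X}\times\mathcal{Y}$. Let $L\colon\mathcal{Y}\times\mathcal{Y}\to\mathbb{R}_+$ satisfy $L(\hat y,y)=\langle\varphi(\hat y),V\varphi(y)+b\rangle+c(y)$ for some $V\in\mathbb{R}^{p\times p}$, $b\in\mathbb{R}^p$, $c\colon\mathcal{Y}\to\mathbb{R}$. Let $\Psi\colon\mathbb{R}^p\to\mathbb{R}\cup\{\infty\}$ be of Legendre type and $\frac1\beta$-strongly convex over $\mathcal{C}$ w.r.t. a norm $\|\cdot\|$ (with $\beta>0$), where $\mathcal{C}$ is a closed convex set with $\varphi(\mathcal{Y})\subseteq\mathcal{C}\subseteq\operatorname{dom}(\Psi)$. Let $\sigma:=\sup_{\hat y\in\mathcal{Y}}\|V^\top\varphi(\hat y)\|_*$, where $\|\cdot\|_*$ is the dual norm, and assume $\sigma>0$. Then for every measurable $g\colon\mathcal{X}\to\mathbb{R}^p$, $$\frac{\delta\mathcal{L}(\hat y_L\circ P^\Psi_{\mathcal{C}}\circ g)^2}{8\beta\sigma^2}\le\delta\mathcal{S}^\Psi_{\mathcal{C}}(g).$$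
   Context: Fenchel conjugate: $\Omega^*(\theta)=\sup_{u\in\operatorname{dom}(\Omega)}\langle u,\theta\rangle-\Omega(u)$. Set $\Omega=\Psi+I_{\mathcal{C}}$ ($I_{\mathcal{C}}$ the indicator of $\mathcal{C}$). The projection-based loss is $S^\Psi_{\mathcal{C}}(\theta,y)=\Omega^*(\theta)+\Omega(\varphi(y))-\langle\theta,\varphi(y)\rangle$. The projection layer is $P^\Psi_{\mathcal{C}}(\theta)=\operatorname{argmin}_{u\in\mathcal{C}}D_\Psi(u,\nabla\Psi^*(\theta))$ with $D_\Psi(u,v)=\Psi(u)-\Psi(v)-\langle\nabla\Psi(v),u-v\rangle$; under the hypotheses it equals $\nabla\Omega^*(\theta)$. "$\frac1\beta$-strongly convex over $\mathcal{C}$ w.r.t. $\|\cdot\|$" means $\Psi(tu+(1-t)v)\le t\Psi(u)+(1-t)\Psi(v)-\frac{t(1-t)}{2\beta}\|u-v\|^2$ for all $u,v\in\mathcal{C}$, $t\in[0,1]$. Calibrated decoding: $\hat y_L(u)\in\operatorname{argmin}_{y'\in\mathcal{Y}}\langle\varphi(y'),Vu+b\rangle$ (ties broken by a fixed rule). Risks: $\mathcal{L}(f)=\mathbb{E}_{(X,Y)\sim\rho}L(f(X),Y)$ for $f\colon\mathcal{X}\to\mathcal{Y}$, $\mathcal{S}^\Psi_{\mathcal{C}}(g)=\mathbb{E}_{(X,Y)\sim\rho}S^\Psi_{\mathcal{C}}(g(X),Y)$; excess risks $\delta\mathcal{L}(f)=\mathcal{L}(f)-\inf_{f'}\mathcal{L}(f')$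 and $\delta\mathcal{S}^\Psi_{\mathcal{C}}(g)=\mathcal{S}^\Psi_{\mathcal{C}}(g)-\inf_{g'}\mathcal{S}^\Psi_{\mathcal{C}}(g')$, infima over measurable maps. *)

theory Defs
  imports "HOL-Probability.Probability"
begin

definition is_norm :: "(real ^ 'p \<Rightarrow> real) \<Rightarrow> bool" where
  "is_norm N \<longleftrightarrow> (\<forall>x. 0 \<le> N x) \<and> (\<forall>x. N x = 0 \<longleftrightarrow> x = 0)
     \<and> (\<forall>a x. N (a *\<^sub>R x) = \<bar>a\<bar> * N x) \<and> (\<forall>x y. N (x + y) \<le> N x + N y)"

definition dual_norm :: "(real ^ 'p \<Rightarrow> real) \<Rightarrow> real ^ 'p \<Rightarrow> real" where
  "dual_norm N z = (SUP u\<in>{u. N u \<le> 1}. z \<bullet> u)"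

definition edom :: "(real ^ 'p \<Rightarrow> ereal) \<Rightarrow> (real ^ 'p) set" where
  "edom \<Psi> = {u. \<Psi> u < \<infinity>}"

definition grad :: "(real ^ 'p \<Rightarrow> real) \<Rightarrow> real ^ 'p \<Rightarrow> real ^ 'p" where
  "grad f x = (SOME g. (f has_derivative (\<lambda>h. g \<bullet> h)) (at x))"

definition proper_closed_convex :: "(real ^ 'p \<Rightarrow> ereal) \<Rightarrow> bool" where
  "proper_closed_convex \<Psi> \<longleftrightarrow>
     (\<forall>u. \<Psi> u \<noteq> -\<infinity>) \<and> edom \<Psi> \<noteq> {}
     \<and> convex (edom \<Psi>) \<and> convex_on (edom \<Psi>) (\<lambda>u. real_of_ereal (\<Psi> u))
     \<and> closed {(u, t::real). \<Psi> u \<le> ereal t}"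

definition essentially_smooth :: "(real ^ 'p \<Rightarrow> ereal) \<Rightarrow> bool" where
  "essentially_smooth \<Psi> \<longleftrightarrow>
     interior (edom \<Psi>) \<noteq> {}
     \<and> (\<forall>x\<in>interior (edom \<Psi>). (\<lambda>u. real_of_ereal (\<Psi> u)) differentiable (at x))
     \<and> (\<forall>s x. (\<forall>k. s k \<in> interior (edom \<Psi>)) \<longrightarrow> s \<longlonglongrightarrow> x \<longrightarrow>
              x \<in> frontier (interior (edom \<Psi>)) \<longrightarrow>
              filterlim (\<lambda>k. norm (grad (\<lambda>u. real_of_ereal (\<Psi> u)) (s k))) at_top sequentially)"

definition strictly_convex_on :: "(real ^ 'p) set \<Rightarrow> (real ^ 'p \<Rightarrow> real) \<Rightarrow> bool" where
  "strictly_convex_on S f \<longleftrightarrow>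
     (\<forall>u\<in>S. \<forall>v\<in>S. \<forall>t\<in>{0<..<1}. u \<noteq> v \<longrightarrow>
        f (t *\<^sub>R u + (1 - t) *\<^sub>R v) < t * f u + (1 - t) * f v)"

definition legendre_type :: "(real ^ 'p \<Rightarrow> ereal) \<Rightarrow> bool" where
  "legendre_type \<Psi> \<longleftrightarrow> proper_closed_convex \<Psi> \<and> essentially_smooth \<Psi>
     \<and> strictly_convex_on (interior (edom \<Psi>)) (\<lambda>u. real_of_ereal (\<Psi> u))"

definition strongly_convex_over ::
  "real \<Rightarrow> (real ^ 'p \<Rightarrow> real) \<Rightarrow> (real ^ 'p) set \<Rightarrow> (real ^ 'p \<Rightarrow> ereal) \<Rightarrow> bool" where
  "strongly_convex_over \<beta> N C \<Psi> \<longleftrightarrow>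
     (\<forall>u\<in>C. \<forall>v\<in>C. \<forall>t\<in>{0..1}.
        \<Psi> (t *\<^sub>R u + (1 - t) *\<^sub>R v)
          \<le> ereal t * \<Psi> u + ereal (1 - t) * \<Psi> v
             - ereal (t * (1 - t) / (2 * \<beta>) * (N (u - v))\<^sup>2))"

definition Omega :: "(real ^ 'p \<Rightarrow> ereal) \<Rightarrow> (real ^ 'p) set \<Rightarrow> real ^ 'p \<Rightarrow> ereal" where
  "Omega \<Psi> C u = (if u \<in> C then \<Psi> u else \<infinity>)"

definition Omega_conj :: "(real ^ 'p \<Rightarrow> ereal) \<Rightarrow> (real ^ 'p) set \<Rightarrow> real ^ 'p \<Rightarrow> ereal" where
  "Omega_conj \<Psi> C \<theta> = (SUP u\<in>edom (Omega \<Psi> C). ereal (u \<bullet> \<theta>) - Omega \<Psi> C u)"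

definition proj_loss ::
  "(real ^ 'p \<Rightarrow> ereal) \<Rightarrow> (real ^ 'p) set \<Rightarrow> ('y \<Rightarrow> real ^ 'p) \<Rightarrow> real ^ 'p \<Rightarrow> 'y \<Rightarrow> ereal" where
  "proj_loss \<Psi> C \<phi> \<theta> y = Omega_conj \<Psi> C \<theta> + Omega \<Psi> C (\<phi> y) - ereal (\<theta> \<bullet> \<phi> y)"

text \<open>Projection layer P(theta), realised as the gradient of Omega* (which is the
  Bregman projection argmin over C of D_Psi(u, grad Psi*(theta)) under the hypotheses).\<close>
definition proj_layer :: "(real ^ 'p \<Rightarrow> ereal) \<Rightarrow> (real ^ 'p) set \<Rightarrow> real ^ 'p \<Rightarrow> real ^ 'p" where
  "proj_layer \<Psi> C \<theta> = grad (\<lambda>\<eta>. real_of_ereal (Omega_conj \<Psi> C \<eta>)) \<theta>"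

text \<open>Calibrated decoding; ties broken by taking the least minimiser w.r.t. the
  (fixed) linear order on the output type.\<close>
definition decode ::
  "('y::{finite,linorder} \<Rightarrow> real ^ 'p) \<Rightarrow> real ^ 'p ^ 'p \<Rightarrow> real ^ 'p \<Rightarrow> real ^ 'p \<Rightarrow> 'y" where
  "decode \<phi> V b u = (LEAST y. \<forall>y'. \<phi> y \<bullet> (V *v u + b) \<le> \<phi> y' \<bullet> (V *v u + b))"

definition target_risk :: "('x \<times> 'y) measure \<Rightarrow> ('y \<Rightarrow> 'y \<Rightarrow> real) \<Rightarrow> ('x \<Rightarrow> 'y) \<Rightarrow> real" where
  "target_risk \<rho> L f = (\<integral>z. L (f (fst z)) (snd z) \<partial>\<rho>)"

definition excess_target_risk ::
  "'x measure \<Rightarrow> ('x \<times> 'y) measure \<Rightarrow> ('y \<Rightarrow> 'y \<Rightarrow> real) \<Rightarrow> ('x \<Rightarrow> 'y) \<Rightarrow> real" where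
  "excess_target_risk MX \<rho> L f =
     target_risk \<rho> L f - (INF f'\<in>measurable MX (count_space UNIV). target_risk \<rho> L f')"

definition surrogate_risk ::
  "('x \<times> 'y) measure \<Rightarrow> (real ^ 'p \<Rightarrow> ereal) \<Rightarrow> (real ^ 'p) set \<Rightarrow> ('y \<Rightarrow> real ^ 'p)
     \<Rightarrow> ('x \<Rightarrow> real ^ 'p) \<Rightarrow> ennreal" where
  "surrogate_risk \<rho> \<Psi> C \<phi> g = (\<integral>\<^sup>+z. e2ennreal (proj_loss \<Psi> C \<phi> (g (fst z)) (snd z)) \<partial>\<rho>)"

definition excess_surrogate_risk ::
  "'x measure \<Rightarrow> ('x \<times> 'y) measure \<Rightarrow> (real ^ 'p \<Rightarrow> ereal) \<Rightarrow> (real ^ 'p) set \<Rightarrow> ('y \<Rightarrow> real ^ 'p)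
     \<Rightarrow> ('x \<Rightarrow> real ^ 'p) \<Rightarrow> ennreal" where
  "excess_surrogate_risk MX \<rho> \<Psi> C \<phi> g =
     surrogate_risk \<rho> \<Psi> C \<phi> g - (INF g'\<in>borel_measurable MX. surrogate_risk \<rho> \<Psi> C \<phi> g')"

end

theory Submission
  imports Defs
begin

text \<open>Conditioning on \<open>x\<close> reduces both excess risks to pointwise quantities. Let \<open>\<eta>(y|x)\<close>
  be the conditional law of the label and \<open>m(x) = \<Sum>\<^sub>y \<eta>(y|x) \<phi>(y)\<close> its mean in \<open>C\<close>.
  Since \<open>L\<close> is affine in \<open>\<phi>(y)\<close>, the conditional target risk of a label \<open>y'\<close> is
  \<open>\<langle>\<phi>(y'), V m(x) + b\<rangle>\<close> up to a term independent of \<open>y'\<close>; the Bayes decoder decodes \<open>m(x)\<close>,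
  and decoding some \<open>u\<close> instead costs at most \<open>2 \<sigma> \<parallel>u - m(x)\<parallel>\<close>. The conditional surrogate
  risk of a score \<open>\<theta>\<close> splits into the Jensen gap of \<open>\<Psi>\<close> at \<open>m(x)\<close>, which does not depend on
  \<open>\<theta>\<close>, plus \<open>\<Omega>\<^sup>*(\<theta>) - \<langle>m(x), \<theta>\<rangle> + \<Psi>(m(x))\<close>, whose infimum over measurable scores is
  zero. By strong convexity the latter is at least \<open>\<parallel>m(x) - P(\<theta>)\<parallel>\<^sup>2 / (2 \<beta>)\<close>, since
  \<open>P(\<theta>)\<close> maximises the strongly concave function \<open>\<langle>u, \<theta>\<rangle> - \<Psi>(u)\<close> over \<open>C\<close>. Squaring the
  regret bound and applying Jensen's inequality to the target excess risk gives the claim.\<close>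

section \<open>Norms on \<open>\<real>\<^sup>p\<close>\<close>

lemma is_norm_zero: "is_norm N \<Longrightarrow> N 0 = 0"
  unfolding is_norm_def by auto

lemma is_norm_nonneg: "is_norm N \<Longrightarrow> 0 \<le> N x"
  unfolding is_norm_def by auto

lemma is_norm_scaleR: "is_norm N \<Longrightarrow> N (a *\<^sub>R x) = \<bar>a\<bar> * N x"
  unfolding is_norm_def by auto

lemma is_norm_triangle: "is_norm N \<Longrightarrow> N (x + y) \<le> N x + N y"
  unfolding is_norm_def by auto

lemma is_norm_pos: "is_norm N \<Longrightarrow> x \<noteq> 0 \<Longrightarrow> 0 < N x"
  unfolding is_norm_def by (metis order_le_less)

lemma is_norm_minus: "is_norm N \<Longrightarrow> N (- x) = N x"
  using is_norm_scaleR[of N "-1" x] by simp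

lemma is_norm_minus_commute: "is_norm N \<Longrightarrow> N (x - y) = N (y - x)"
  using is_norm_minus[of N "x - y"] by simp

lemma is_norm_sum:
  assumes "is_norm N" shows "N (sum f A) \<le> (\<Sum>i\<in>A. N (f i))"
proof (induction A rule: infinite_finite_induct)
  case (insert a A)
  then show ?case using is_norm_triangle[OF assms, of "f a" "sum f A"] by simp
qed (use is_norm_zero[OF assms] in simp_all)

lemma is_norm_le_norm:
  fixes x :: "real ^ 'p"
  assumes "is_norm N" shows "N x \<le> (\<Sum>b\<in>Basis. N b) * norm x"
proof -
  have "N x = N (\<Sum>b\<in>Basis. (x \<bullet> b) *\<^sub>R b)" by (simp add: euclidean_representation)
  also have "\<dots> \<le> (\<Sum>b\<in>Basis. N ((x \<bullet> b) *\<^sub>R b))" by (rule is_norm_sum[OF assms])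
  also have "\<dots> = (\<Sum>b\<in>Basis. \<bar>x \<bullet> b\<bar> * N b)" using is_norm_scaleR[OF assms] by simp
  also have "\<dots> \<le> (\<Sum>b\<in>Basis. norm x * N b)"
    by (intro sum_mono mult_right_mono Basis_le_norm is_norm_nonneg[OF assms]) simp
  finally show ?thesis by (simp add: sum_distrib_left mult.commute)
qed

lemma continuous_on_is_norm:
  fixes N :: "real ^ 'p \<Rightarrow> real"
  assumes "is_norm N" shows "continuous_on S N"
proof (rule lipschitz_on_continuous_on)
  show "(\<Sum>b\<in>Basis. N b)-lipschitz_on S N"
  proof (rule lipschitz_onI)
    fix x y
    have "N x \<le> N (x - y) + N y" "N y \<le> N (x - y) + N x"
      using is_norm_triangle[OF assms, of "x - y" y] is_norm_triangle[OF assms, of "y - x" x]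
        is_norm_minus_commute[OF assms, of x y] by simp_all
    then show "dist (N x) (N y) \<le> (\<Sum>b\<in>Basis. N b) * dist x y"
      using is_norm_le_norm[OF assms, of "x - y"] by (simp add: dist_real_def dist_norm)
  qed (simp add: sum_nonneg is_norm_nonneg[OF assms])
qed

text \<open>The constant is the minimum of \<open>N\<close> on the Euclidean unit sphere.\<close>
lemma is_norm_ge_norm:
  fixes N :: "real ^ 'p \<Rightarrow> real"
  assumes "is_norm N"
  obtains c where "c > 0" "\<And>x. c * norm x \<le> N x"
proof -
  obtain b :: "real ^ 'p" where "b \<in> Basis" using nonempty_Basis by blast
  then have "sphere (0::real ^ 'p) 1 \<noteq> {}" by (auto intro!: exI[of _ b])
  then obtain x0 where x0: "x0 \<in> sphere 0 1" "\<And>y. y \<in> sphere 0 1 \<Longrightarrow> N x0 \<le> N y"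
    using continuous_attains_inf[OF compact_sphere _ continuous_on_is_norm[OF assms]] by blast
  have "N x0 * norm x \<le> N x" for x
  proof (cases "x = 0")
    case False
    then have "N x0 \<le> N ((1 / norm x) *\<^sub>R x)" by (intro x0(2)) simp
    then show ?thesis using False is_norm_scaleR[OF assms] by (simp add: field_simps)
  qed (simp add: is_norm_zero[OF assms])
  moreover have "N x0 > 0" using x0(1) is_norm_pos[OF assms, of x0] by fastforce
  ultimately show ?thesis using that by blast
qed

lemma inner_le_dual_norm:
  fixes z w :: "real ^ 'p"
  assumes "is_norm N" shows "z \<bullet> w \<le> dual_norm N z * N w"
proof (cases "w = 0")
  case False
  obtain c where c: "c > 0" "\<And>x. c * norm x \<le> N x" using is_norm_ge_norm[OF assms] by blast
  have Nw: "N w > 0" using is_norm_pos[OF assms False] .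
  have bdd: "bdd_above ((\<lambda>u. z \<bullet> u) ` {u. N u \<le> 1})"
  proof (rule bdd_aboveI2)
    fix v assume "v \<in> {u. N u \<le> 1}"
    then have "norm v \<le> 1 / c" using c by (simp add: field_simps order_trans[OF c(2)])
    then show "z \<bullet> v \<le> norm z / c"
      using norm_cauchy_schwarz[of z v] mult_left_mono[of "norm v" "1 / c" "norm z"] by simp
  qed
  have "z \<bullet> ((1 / N w) *\<^sub>R w) \<le> dual_norm N z"
    unfolding dual_norm_def using Nw is_norm_scaleR[OF assms] by (intro cSUP_upper[OF _ bdd]) simp
  then show ?thesis using Nw by (simp add: field_simps)
qed (simp add: is_norm_zero[OF assms])

section \<open>Conjugate of a strongly convex function\<close>

lemma linear_minus_square_le: assumes "(k::real) > 0" shows "D * d - k * d\<^sup>2 \<le> D\<^sup>2 / (4 * k)"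
proof -
  have "0 \<le> (2 * k * d - D)\<^sup>2" by simp
  then have "4 * k * (D * d - k * d\<^sup>2) \<le> D\<^sup>2" by (simp add: power2_eq_square algebra_simps)
  then show ?thesis using assms by (simp add: field_simps mult.commute)
qed

lemma has_derivative_of_quadratic_remainder:
  fixes f :: "'a::real_normed_vector \<Rightarrow> 'b::real_normed_vector"
  assumes "bounded_linear D" and "\<And>y. norm (f y - f x - D (y - x)) \<le> K * (norm (y - x))\<^sup>2"
  shows "(f has_derivative D) (at x)"
  unfolding has_derivative_iff_norm
proof (intro conjI assms(1))
  have "((\<lambda>y. K * norm (y - x)) \<longlongrightarrow> K * norm (x - x)) (at x)"
    by (intro tendsto_intros)
  then have lim: "((\<lambda>y. K * norm (y - x)) \<longlongrightarrow> 0) (at x)" by simp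
  have bound: "norm (norm (f y - f x - D (y - x)) / norm (y - x)) \<le> K * norm (y - x)" for y
    using assms(2)[of y] by (simp add: divide_le_eq power2_eq_square mult.assoc)
  show "((\<lambda>y. norm (f y - f x - D (y - x)) / norm (y - x)) \<longlongrightarrow> 0) (at x)"
    by (rule Lim_null_comparison[OF always_eventually[OF allI[OF bound]] lim])
qed

lemma grad_eqI:
  assumes "(f has_derivative (\<lambda>h. g \<bullet> h)) (at x)"
  shows "grad f x = g"
proof -
  have "\<exists>g. (f has_derivative (\<lambda>h. g \<bullet> h)) (at x)" using assms by blast
  then have "(f has_derivative (\<lambda>h. grad f x \<bullet> h)) (at x)"
    unfolding grad_def by (rule someI_ex)
  then have "(\<lambda>h. grad f x \<bullet> h) = (\<lambda>h. g \<bullet> h)" using assms by (rule has_derivative_unique)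
  then show ?thesis by (metis vector_eq_rdot)
qed

locale strongly_convex_conjugate =
  fixes \<Psi> :: "real ^ 'p \<Rightarrow> ereal" and N :: "real ^ 'p \<Rightarrow> real"
    and C :: "(real ^ 'p) set" and \<beta> :: real
  assumes norm: "is_norm N" and beta_pos: "\<beta> > 0"
    and strongly_convex: "strongly_convex_over \<beta> N C \<Psi>"
    and closed_C: "closed C" and convex_C: "convex C" and C_nonempty: "C \<noteq> {}"
    and C_subset_edom: "C \<subseteq> edom \<Psi>" and Psi_not_MInfty: "\<And>u. \<Psi> u \<noteq> -\<infinity>"
    and closed_epigraph_Psi: "closed {(u, t::real). \<Psi> u \<le> ereal t}"
begin

definition psi :: "real ^ 'p \<Rightarrow> real" where
  "psi u = real_of_ereal (\<Psi> u)"

definition conj_obj :: "real ^ 'p \<Rightarrow> real ^ 'p \<Rightarrow> real" where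
  "conj_obj \<theta> u = u \<bullet> \<theta> - psi u"

lemma Psi_eq_psi: "u \<in> C \<Longrightarrow> \<Psi> u = ereal (psi u)"
  using C_subset_edom Psi_not_MInfty[of u] unfolding psi_def edom_def by (cases "\<Psi> u") auto

lemma norm_lower_bound: obtains c where "c > 0" "\<And>x. c * norm x \<le> N x"
  using is_norm_ge_norm[OF norm] by blast

lemma psi_strongly_convex:
  assumes "u \<in> C" "v \<in> C" "0 \<le> t" "t \<le> 1"
  shows "psi (t *\<^sub>R u + (1 - t) *\<^sub>R v)
           \<le> t * psi u + (1 - t) * psi v - t * (1 - t) / (2 * \<beta>) * (N (u - v))\<^sup>2"
proof -
  have "t *\<^sub>R u + (1 - t) *\<^sub>R v \<in> C" using assms convex_C by (simp add: convex_def)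
  moreover have "\<Psi> (t *\<^sub>R u + (1 - t) *\<^sub>R v) \<le> ereal t * \<Psi> u + ereal (1 - t) * \<Psi> v
                   - ereal (t * (1 - t) / (2 * \<beta>) * (N (u - v))\<^sup>2)"
    using strongly_convex assms unfolding strongly_convex_over_def by auto
  ultimately show ?thesis using Psi_eq_psi assms(1,2) by simp
qed

lemma conj_obj_strongly_concave:
  assumes "u \<in> C" "v \<in> C" "0 \<le> t" "t \<le> 1"
  shows "t * conj_obj \<theta> u + (1 - t) * conj_obj \<theta> v + t * (1 - t) / (2 * \<beta>) * (N (u - v))\<^sup>2
           \<le> conj_obj \<theta> (t *\<^sub>R u + (1 - t) *\<^sub>R v)"
  using psi_strongly_convex[OF assms] unfolding conj_obj_def by (simp add: inner_add_left algebra_simps)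

lemma conj_obj_midpoint:
  assumes "u \<in> C" "v \<in> C"
  shows "conj_obj \<theta> u + conj_obj \<theta> v + (N (u - v))\<^sup>2 / (4 * \<beta>)
           \<le> 2 * conj_obj \<theta> ((1/2) *\<^sub>R (u + v))"
  using conj_obj_strongly_concave[OF assms, of "1/2" \<theta>] by (simp add: scaleR_add_right field_simps)

lemma midpoint_in_C: "u \<in> C \<Longrightarrow> v \<in> C \<Longrightarrow> (1/2) *\<^sub>R (u + v) \<in> C"
  using convex_C by (simp add: convex_def scaleR_add_right)

lemma convex_on_psi: "convex_on C psi"
proof (intro convex_onI convex_C)
  fix t :: real and u v assume "0 < t" "t < 1" "u \<in> C" "v \<in> C"
  moreover have "0 \<le> (1 - t) * t / (2 * \<beta>) * (N (u - v))\<^sup>2"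
    using \<open>0 < t\<close> \<open>t < 1\<close> beta_pos by simp
  ultimately show "psi ((1 - t) *\<^sub>R u + t *\<^sub>R v) \<le> (1 - t) * psi u + t * psi v"
    using psi_strongly_convex[of u v "1 - t"] by simp
qed

lemma closed_epigraph_psi: "closed (epigraph C psi)"
proof -
  have "epigraph C psi = (C \<times> UNIV) \<inter> {(u, t). \<Psi> u \<le> ereal t}"
    by (auto simp: epigraph_def Psi_eq_psi)
  then show ?thesis using closed_Times[OF closed_C closed_UNIV] closed_epigraph_Psi closed_Int by metis
qed

text \<open>Separate \<open>(m, psi m - e)\<close> from the closed convex epigraph of \<open>psi\<close>.\<close>
lemma approx_subgradient_exists:
  assumes m: "m \<in> C" and e: "e > 0"
  obtains \<theta> where "\<And>u. u \<in> C \<Longrightarrow> conj_obj \<theta> u \<le> conj_obj \<theta> m + e"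
proof -
  have "(m, psi m - e) \<notin> epigraph C psi" using e by (simp add: mem_epigraph)
  then obtain a d where below: "a \<bullet> (m, psi m - e) < d" and above: "\<forall>p\<in>epigraph C psi. a \<bullet> p > d"
    using separating_hyperplane_closed_point[OF convex_epigraphI[OF convex_on_psi] closed_epigraph_psi]
    by blast
  obtain a1 a2 where a: "a = (a1, a2)" by (cases a)
  have above': "a1 \<bullet> u + a2 * psi u > d" if "u \<in> C" for u
    using bspec[OF above, of "(u, psi u)"] that a by (simp add: mem_epigraph inner_Pair)
  have "a2 * e > 0" using above'[OF m] below a by (simp add: inner_Pair algebra_simps)
  then have a2: "a2 > 0" using e by (simp add: zero_less_mult_iff)
  have "conj_obj ((- 1 / a2) *\<^sub>R a1) u \<le> conj_obj ((- 1 / a2) *\<^sub>R a1) m + e" if u: "u \<in> C" for u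
  proof -
    have "a1 \<bullet> m + a2 * (psi m - e) < a1 \<bullet> u + a2 * psi u" using above'[OF u] below a by (simp add: inner_Pair)
    then have "(a1 \<bullet> m + a2 * (psi m - e)) / a2 < (a1 \<bullet> u + a2 * psi u) / a2"
      using a2 by (rule divide_strict_right_mono)
    then have "(a1 \<bullet> m) / a2 + (psi m - e) < (a1 \<bullet> u) / a2 + psi u"
      using a2 by (simp add: add_divide_distrib)
    then show ?thesis unfolding conj_obj_def by (simp add: inner_commute)
  qed
  then show ?thesis using that by blast
qed

lemma psi_affine_minorant:
  obtains K \<theta>\<^sub>0 where "\<And>u. u \<in> C \<Longrightarrow> K + u \<bullet> \<theta>\<^sub>0 \<le> psi u"
proof -
  obtain u\<^sub>0 where "u\<^sub>0 \<in> C" using C_nonempty by blast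
  then obtain \<theta>\<^sub>0 where "\<And>u. u \<in> C \<Longrightarrow> conj_obj \<theta>\<^sub>0 u \<le> conj_obj \<theta>\<^sub>0 u\<^sub>0 + 1"
    using approx_subgradient_exists[OF _ zero_less_one] by blast
  then show ?thesis using that[of "- conj_obj \<theta>\<^sub>0 u\<^sub>0 - 1" \<theta>\<^sub>0] unfolding conj_obj_def by force
qed

text \<open>Strong convexity makes \<open>conj_obj \<theta>\<close> decay quadratically away from any fixed point
  while an affine minorant of \<open>psi\<close> lets it grow at most linearly.\<close>
lemma conj_obj_bounded_above: obtains M where "\<And>v. v \<in> C \<Longrightarrow> conj_obj \<theta> v \<le> M"
proof -
  obtain u\<^sub>0 where u\<^sub>0: "u\<^sub>0 \<in> C" using C_nonempty by blast
  obtain K \<theta>\<^sub>0 where K: "\<And>u. u \<in> C \<Longrightarrow> K + u \<bullet> \<theta>\<^sub>0 \<le> psi u" using psi_affine_minorant by blast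
  obtain c where c: "c > 0" "\<And>x. c * norm x \<le> N x" using norm_lower_bound by blast
  define D where "D = norm (\<theta> - \<theta>\<^sub>0)"
  define k where "k = c\<^sup>2 / (4 * \<beta>)"
  have k: "k > 0" unfolding k_def using c beta_pos by simp
  have "conj_obj \<theta> v \<le> 2 * (u\<^sub>0 \<bullet> (\<theta> - \<theta>\<^sub>0)) - 2 * K - conj_obj \<theta> u\<^sub>0 + D\<^sup>2 / (4 * k)"
    if v: "v \<in> C" for v
  proof -
    let ?d = "v - u\<^sub>0"
    have "conj_obj \<theta> v + conj_obj \<theta> u\<^sub>0 + (N ?d)\<^sup>2 / (4 * \<beta>)
        \<le> 2 * conj_obj \<theta> ((1/2) *\<^sub>R (v + u\<^sub>0))" by (rule conj_obj_midpoint[OF v u\<^sub>0])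
    also have "\<dots> \<le> 2 * (((1/2) *\<^sub>R (v + u\<^sub>0)) \<bullet> (\<theta> - \<theta>\<^sub>0) - K)"
      using K[OF midpoint_in_C[OF v u\<^sub>0]] unfolding conj_obj_def by (simp add: inner_diff_right)
    also have "((1/2) *\<^sub>R (v + u\<^sub>0)) \<bullet> (\<theta> - \<theta>\<^sub>0) = (?d \<bullet> (\<theta> - \<theta>\<^sub>0)) / 2 + u\<^sub>0 \<bullet> (\<theta> - \<theta>\<^sub>0)"
      by (simp add: inner_add_left inner_diff_left field_simps)
    finally have "conj_obj \<theta> v \<le> ?d \<bullet> (\<theta> - \<theta>\<^sub>0) - (N ?d)\<^sup>2 / (4 * \<beta>)
                    + (2 * (u\<^sub>0 \<bullet> (\<theta> - \<theta>\<^sub>0)) - 2 * K - conj_obj \<theta> u\<^sub>0)"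
      by (simp add: field_simps)
    moreover have "?d \<bullet> (\<theta> - \<theta>\<^sub>0) \<le> D * norm ?d"
      unfolding D_def using norm_cauchy_schwarz[of ?d] by (simp add: mult.commute)
    moreover have "k * (norm ?d)\<^sup>2 \<le> (N ?d)\<^sup>2 / (4 * \<beta>)"
    proof -
      have "(c * norm ?d)\<^sup>2 \<le> (N ?d)\<^sup>2" using c by (intro power_mono) auto
      then show ?thesis unfolding k_def using beta_pos by (simp add: field_simps power_mult_distrib)
    qed
    moreover have "D * norm ?d - k * (norm ?d)\<^sup>2 \<le> D\<^sup>2 / (4 * k)" by (rule linear_minus_square_le[OF k])
    ultimately show ?thesis by linarith
  qed
  then show ?thesis using that by blast
qed

lemma near_maximizers_close:
  assumes "u \<in> C" "w \<in> C" "\<And>v. v \<in> C \<Longrightarrow> conj_obj \<theta> v \<le> S"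
    and "S - e \<le> conj_obj \<theta> u" "S - e \<le> conj_obj \<theta> w"
  shows "(N (u - w))\<^sup>2 \<le> 8 * \<beta> * e"
proof -
  have "conj_obj \<theta> u + conj_obj \<theta> w + (N (u - w))\<^sup>2 / (4 * \<beta>) \<le> 2 * S"
    using conj_obj_midpoint[OF assms(1,2), of \<theta>] assms(3)[OF midpoint_in_C[OF assms(1,2)]] by linarith
  then have "(N (u - w))\<^sup>2 / (4 * \<beta>) \<le> 2 * e" using assms(4,5) by linarith
  then show ?thesis using beta_pos by (simp add: field_simps)
qed

lemma maximizing_sequence_Cauchy:
  assumes v: "\<And>n. v n \<in> C" and le_S: "\<And>u. u \<in> C \<Longrightarrow> conj_obj \<theta> u \<le> S"
    and near_S: "\<And>n. S - inverse (real (Suc n)) < conj_obj \<theta> (v n)"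
  shows "Cauchy v"
proof (rule metric_CauchyI)
  obtain c where c: "c > 0" "\<And>x. c * norm x \<le> N x" using norm_lower_bound by blast
  fix e :: real assume e: "e > 0"
  obtain n\<^sub>0 :: nat where "8 * \<beta> / (c * e)\<^sup>2 < real n\<^sub>0"
    using reals_Archimedean2 by blast
  then have n\<^sub>0: "8 * \<beta> / (c * e)\<^sup>2 < real (Suc n\<^sub>0)" by simp
  have "dist (v m) (v n) < e" if "m \<ge> n\<^sub>0" "n \<ge> n\<^sub>0" for m n
  proof -
    have "S - inverse (real (Suc n\<^sub>0)) \<le> conj_obj \<theta> (v k)" if "k \<ge> n\<^sub>0" for k
    proof -
      have "inverse (real (Suc k)) \<le> inverse (real (Suc n\<^sub>0))" using that by (simp add: field_simps)
      then show ?thesis using near_S[of k] by linarith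
    qed
    then have "(N (v m - v n))\<^sup>2 \<le> 8 * \<beta> * inverse (real (Suc n\<^sub>0))"
      using \<open>m \<ge> n\<^sub>0\<close> \<open>n \<ge> n\<^sub>0\<close> by (intro near_maximizers_close[OF v v le_S]) auto
    also have "\<dots> < (c * e)\<^sup>2" using n\<^sub>0 c e by (simp add: field_simps)
    finally have "N (v m - v n) < c * e"
      by (rule power_less_imp_less_base) (use c e in simp)
    then have "c * norm (v m - v n) < c * e" using c(2)[of "v m - v n"] by linarith
    then show ?thesis using c(1) by (simp add: dist_norm)
  qed
  then show "\<exists>M. \<forall>m\<ge>M. \<forall>n\<ge>M. dist (v m) (v n) < e" by blast
qed

text \<open>The limit of a maximising sequence stays in the closed epigraph of \<open>psi\<close>.\<close>
lemma conj_obj_has_maximizer: "\<exists>u\<in>C. \<forall>v\<in>C. conj_obj \<theta> v \<le> conj_obj \<theta> u"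
proof -
  obtain M where "\<And>v. v \<in> C \<Longrightarrow> conj_obj \<theta> v \<le> M" using conj_obj_bounded_above by blast
  then have bdd: "bdd_above (conj_obj \<theta> ` C)" by (metis bdd_aboveI2)
  define S where "S = (SUP v\<in>C. conj_obj \<theta> v)"
  have le_S: "conj_obj \<theta> v \<le> S" if "v \<in> C" for v
    unfolding S_def using cSUP_upper[OF that bdd] .
  have "\<exists>v\<in>C. S - inverse (real (Suc n)) < conj_obj \<theta> v" for n
    using less_cSUP_iff[OF C_nonempty bdd, of "S - inverse (real (Suc n))"] unfolding S_def by simp
  then obtain v where v: "\<And>n. v n \<in> C" "\<And>n. S - inverse (real (Suc n)) < conj_obj \<theta> (v n)"
    by metis
  then have "Cauchy v" using le_S by (intro maximizing_sequence_Cauchy)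
  then obtain u where u: "v \<longlonglongrightarrow> u" using Cauchy_convergent_iff convergent_def by blast
  have "u \<in> C" using closed_sequentially[OF closed_C v(1) u] .
  have "(\<lambda>n. conj_obj \<theta> (v n)) \<longlonglongrightarrow> S"
  proof (rule tendsto_sandwich[of "\<lambda>n. S - inverse (real (Suc n))" _ _ "\<lambda>n. S"])
    show "(\<lambda>n. S - inverse (real (Suc n))) \<longlonglongrightarrow> S"
      using tendsto_diff[OF tendsto_const LIMSEQ_inverse_real_of_nat, of S] by simp
    show "\<forall>\<^sub>F n in sequentially. S - inverse (real (Suc n)) \<le> conj_obj \<theta> (v n)"
      using v(2) less_imp_le by (blast intro: always_eventually)
    show "\<forall>\<^sub>F n in sequentially. conj_obj \<theta> (v n) \<le> S"
      using le_S v(1) by (blast intro: always_eventually)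
  qed simp
  then have "(\<lambda>n. (v n, v n \<bullet> \<theta> - conj_obj \<theta> (v n))) \<longlonglongrightarrow> (u, u \<bullet> \<theta> - S)"
    by (intro tendsto_intros u)
  moreover have "(v n, v n \<bullet> \<theta> - conj_obj \<theta> (v n)) \<in> epigraph C psi" for n
    using v(1) by (simp add: mem_epigraph conj_obj_def)
  ultimately have "(u, u \<bullet> \<theta> - S) \<in> epigraph C psi"
    by (rule closed_sequentially[OF closed_epigraph_psi, rotated])
  then have "S \<le> conj_obj \<theta> u" by (simp add: mem_epigraph conj_obj_def)
  then show ?thesis using \<open>u \<in> C\<close> le_S by force
qed

definition conj_argmax :: "real ^ 'p \<Rightarrow> real ^ 'p" where
  "conj_argmax \<theta> = (SOME u. u \<in> C \<and> (\<forall>v\<in>C. conj_obj \<theta> v \<le> conj_obj \<theta> u))"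

definition conjugate :: "real ^ 'p \<Rightarrow> real" where
  "conjugate \<theta> = conj_obj \<theta> (conj_argmax \<theta>)"

lemma conj_argmax_spec: "conj_argmax \<theta> \<in> C \<and> (\<forall>v\<in>C. conj_obj \<theta> v \<le> conjugate \<theta>)"
  unfolding conj_argmax_def conjugate_def by (rule someI_ex) (use conj_obj_has_maximizer in blast)

lemma conj_argmax_in_C: "conj_argmax \<theta> \<in> C"
  using conj_argmax_spec by blast

lemma conj_obj_le_conjugate: "v \<in> C \<Longrightarrow> conj_obj \<theta> v \<le> conjugate \<theta>"
  using conj_argmax_spec by blast

lemma Omega_conj_eq_conjugate: "Omega_conj \<Psi> C \<theta> = ereal (conjugate \<theta>)"
proof -
  have "edom (Omega \<Psi> C) = C" using C_subset_edom by (auto simp: edom_def Omega_def)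
  then have "Omega_conj \<Psi> C \<theta> = (SUP u\<in>C. ereal (conj_obj \<theta> u))"
    unfolding Omega_conj_def by (intro SUP_cong) (auto simp: Omega_def conj_obj_def Psi_eq_psi)
  also have "\<dots> = ereal (conjugate \<theta>)"
  proof (rule antisym)
    show "(SUP u\<in>C. ereal (conj_obj \<theta> u)) \<le> ereal (conjugate \<theta>)"
      using conj_obj_le_conjugate by (simp add: SUP_least)
    show "ereal (conjugate \<theta>) \<le> (SUP u\<in>C. ereal (conj_obj \<theta> u))"
      unfolding conjugate_def by (rule SUP_upper[OF conj_argmax_in_C])
  qed
  finally show ?thesis .
qed

lemma conj_obj_quadratic_growth:
  assumes m: "m \<in> C"
  shows "conj_obj \<theta> m + (N (m - conj_argmax \<theta>))\<^sup>2 / (2 * \<beta>) \<le> conjugate \<theta>"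
proof -
  let ?u = "conj_argmax \<theta>" and ?Q = "(N (m - conj_argmax \<theta>))\<^sup>2 / (2 * \<beta>)"
  have "z * ?Q \<le> conjugate \<theta> - conj_obj \<theta> m" if z: "0 < z" "z < 1" for z
  proof -
    have "(1 - z) * conj_obj \<theta> m + z * conjugate \<theta> + (1 - z) * z / (2 * \<beta>) * (N (m - ?u))\<^sup>2
        \<le> conj_obj \<theta> ((1 - z) *\<^sub>R m + z *\<^sub>R ?u)"
      using conj_obj_strongly_concave[OF m conj_argmax_in_C, of "1 - z" \<theta>] z
      unfolding conjugate_def by simp
    also have "\<dots> \<le> conjugate \<theta>"
      using convex_C m conj_argmax_in_C z by (intro conj_obj_le_conjugate) (simp add: convex_def)
    finally have "(1 - z) * (z * ?Q) \<le> (1 - z) * (conjugate \<theta> - conj_obj \<theta> m)"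
      by (simp add: algebra_simps)
    then show ?thesis by (rule mult_left_le_imp_le) (use z(2) in simp)
  qed
  then have "?Q \<le> conjugate \<theta> - conj_obj \<theta> m" by (rule field_le_mult_one_interval)
  then show ?thesis by simp
qed

text \<open>The lower bound is the defining inequality of \<open>conjugate\<close>, the upper bound is
  \<open>conj_obj_quadratic_growth\<close> at the maximiser for the perturbed slope.\<close>
lemma conjugate_has_derivative: "(conjugate has_derivative (\<lambda>h. conj_argmax \<theta> \<bullet> h)) (at \<theta>)"
proof -
  obtain c where c: "c > 0" "\<And>x. c * norm x \<le> N x" using norm_lower_bound by blast
  show ?thesis
  proof (rule has_derivative_of_quadratic_remainder[OF bounded_linear_inner_right, where K = "\<beta> / (2 * c\<^sup>2)"])
    fix \<eta>
    let ?u = "conj_argmax \<theta>" and ?u' = "conj_argmax \<eta>" and ?h = "\<eta> - \<theta>"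
    let ?r = "N (?u' - ?u)"
    have lower: "conjugate \<theta> + ?u \<bullet> ?h \<le> conjugate \<eta>"
      using conj_obj_le_conjugate[OF conj_argmax_in_C, of \<eta> \<theta>]
      unfolding conjugate_def conj_obj_def by (simp add: inner_diff_right)
    have "conjugate \<eta> = conj_obj \<theta> ?u' + ?u \<bullet> ?h + (?u' - ?u) \<bullet> ?h"
      unfolding conjugate_def conj_obj_def by (simp add: inner_diff_right inner_diff_left)
    moreover have "conj_obj \<theta> ?u' + ?r\<^sup>2 / (2 * \<beta>) \<le> conjugate \<theta>"
      using conj_obj_quadratic_growth[OF conj_argmax_in_C, of \<theta> \<eta>]
        is_norm_minus_commute[OF norm, of ?u' ?u] by simp
    moreover have "(?u' - ?u) \<bullet> ?h \<le> (norm ?h / c) * ?r"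
    proof -
      have "(?u' - ?u) \<bullet> ?h \<le> norm (?u' - ?u) * norm ?h" by (rule norm_cauchy_schwarz)
      also have "\<dots> \<le> (?r / c) * norm ?h"
        using c(2)[of "?u' - ?u"] c(1) by (intro mult_right_mono) (simp_all add: field_simps)
      also have "\<dots> = (norm ?h / c) * ?r" by (simp add: algebra_simps)
      finally show ?thesis .
    qed
    moreover have "(norm ?h / c) * ?r - (1 / (2 * \<beta>)) * ?r\<^sup>2 \<le> (norm ?h / c)\<^sup>2 / (4 * (1 / (2 * \<beta>)))"
      by (rule linear_minus_square_le) (use beta_pos in simp)
    moreover have "(norm ?h / c)\<^sup>2 / (4 * (1 / (2 * \<beta>))) = \<beta> / (2 * c\<^sup>2) * (norm ?h)\<^sup>2"
      using c(1) beta_pos by (simp add: field_simps power2_eq_square)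
    moreover have "(1 / (2 * \<beta>)) * ?r\<^sup>2 = ?r\<^sup>2 / (2 * \<beta>)" by simp
    ultimately show "norm (conjugate \<eta> - conjugate \<theta> - ?u \<bullet> ?h) \<le> \<beta> / (2 * c\<^sup>2) * (norm ?h)\<^sup>2"
      using lower unfolding real_norm_def abs_le_iff by (intro conjI) linarith+
  qed
qed

lemma proj_layer_eq_conj_argmax: "proj_layer \<Psi> C \<theta> = conj_argmax \<theta>"
proof -
  have "(\<lambda>\<eta>. real_of_ereal (Omega_conj \<Psi> C \<eta>)) = conjugate"
    by (simp add: fun_eq_iff Omega_conj_eq_conjugate)
  then show ?thesis unfolding proj_layer_def using grad_eqI[OF conjugate_has_derivative] by simp
qed

lemma continuous_on_conjugate: "continuous_on S conjugate"
  using conjugate_has_derivative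
  by (intro has_derivative_continuous_on) (auto intro: has_derivative_at_withinI)

lemma conj_argmax_monotone:
  "(N (conj_argmax \<theta>\<^sub>1 - conj_argmax \<theta>\<^sub>2))\<^sup>2 / \<beta> \<le> (conj_argmax \<theta>\<^sub>1 - conj_argmax \<theta>\<^sub>2) \<bullet> (\<theta>\<^sub>1 - \<theta>\<^sub>2)"
proof -
  let ?u\<^sub>1 = "conj_argmax \<theta>\<^sub>1" and ?u\<^sub>2 = "conj_argmax \<theta>\<^sub>2"
  have "conj_obj \<theta>\<^sub>1 ?u\<^sub>2 + (N (?u\<^sub>2 - ?u\<^sub>1))\<^sup>2 / (2 * \<beta>) \<le> conj_obj \<theta>\<^sub>1 ?u\<^sub>1"
    "conj_obj \<theta>\<^sub>2 ?u\<^sub>1 + (N (?u\<^sub>1 - ?u\<^sub>2))\<^sup>2 / (2 * \<beta>) \<le> conj_obj \<theta>\<^sub>2 ?u\<^sub>2"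
    using conj_obj_quadratic_growth[OF conj_argmax_in_C] unfolding conjugate_def by auto
  then show ?thesis using is_norm_minus_commute[OF norm, of ?u\<^sub>2 ?u\<^sub>1] unfolding conj_obj_def
    by (simp add: inner_diff_left inner_diff_right algebra_simps)
qed

lemma continuous_on_conj_argmax: "continuous_on S conj_argmax"
proof -
  obtain c where c: "c > 0" "\<And>x. c * norm x \<le> N x" using norm_lower_bound by blast
  have "norm (conj_argmax \<theta>\<^sub>1 - conj_argmax \<theta>\<^sub>2) \<le> \<beta> / c\<^sup>2 * norm (\<theta>\<^sub>1 - \<theta>\<^sub>2)" for \<theta>\<^sub>1 \<theta>\<^sub>2
  proof -
    let ?d = "conj_argmax \<theta>\<^sub>1 - conj_argmax \<theta>\<^sub>2"
    have "c\<^sup>2 * (norm ?d)\<^sup>2 \<le> (N ?d)\<^sup>2"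
      using c power_mono[of "c * norm ?d" "N ?d" 2] by (simp add: power_mult_distrib)
    also have "\<dots> \<le> \<beta> * (?d \<bullet> (\<theta>\<^sub>1 - \<theta>\<^sub>2))"
      using conj_argmax_monotone[of \<theta>\<^sub>1 \<theta>\<^sub>2] beta_pos by (simp add: field_simps)
    also have "\<dots> \<le> \<beta> * (norm ?d * norm (\<theta>\<^sub>1 - \<theta>\<^sub>2))"
      using beta_pos norm_cauchy_schwarz by (intro mult_left_mono) auto
    finally have "norm ?d * (c\<^sup>2 * norm ?d) \<le> norm ?d * (\<beta> * norm (\<theta>\<^sub>1 - \<theta>\<^sub>2))"
      by (simp add: power2_eq_square algebra_simps)
    then show ?thesis
      using c(1) beta_pos by (cases "?d = 0") (auto simp: field_simps intro!: mult_nonneg_nonneg)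
  qed
  then show ?thesis using beta_pos
    by (intro lipschitz_on_continuous_on[of "\<beta> / c\<^sup>2"] lipschitz_onI) (auto simp: dist_norm)
qed

lemma borel_measurable_psi_comp:
  assumes f: "f \<in> borel_measurable M" and f_C: "\<And>x. x \<in> space M \<Longrightarrow> f x \<in> C"
  shows "(\<lambda>x. psi (f x)) \<in> borel_measurable M"
proof -
  define psi_C where "psi_C u = (if u \<in> C then psi u else 0)" for u
  have "psi_C \<in> borel_measurable borel"
  proof (rule borel_measurable_iff_le[THEN iffD2], rule allI)
    fix a :: real
    have "closed ((\<lambda>u. (u, a)) -` epigraph C psi)"
      by (intro continuous_closed_vimage closed_epigraph_psi continuous_intros)
    moreover have "{u. psi_C u \<le> a} = (\<lambda>u. (u, a)) -` epigraph C psi \<union> (if 0 \<le> a then - C else {})"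
      unfolding psi_C_def by (auto simp: mem_epigraph)
    ultimately show "{u \<in> space borel. psi_C u \<le> a} \<in> sets borel"
      using closed_C by (auto intro: borel_closed borel_open)
  qed
  then have "(\<lambda>x. psi_C (f x)) \<in> borel_measurable M" using f by measurable
  then show ?thesis by (rule measurable_cong[THEN iffD1, rotated]) (simp add: psi_C_def f_C)
qed

end

section \<open>Disintegration along a finite label set\<close>

locale label_disintegration =
  fixes MX :: "'x measure" and \<rho> :: "('x \<times> 'y::finite) measure"
  assumes prob_space_rho: "prob_space \<rho>"
    and sets_rho: "sets \<rho> = sets (MX \<Otimes>\<^sub>M count_space UNIV)"
begin

definition marginal :: "'x measure" where
  "marginal = distr \<rho> MX fst"

definition label_part :: "'y \<Rightarrow> 'x measure" where
  "label_part y = distr (density \<rho> (indicator {z. snd z = y})) MX fst"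

definition label_density :: "'y \<Rightarrow> 'x \<Rightarrow> ennreal" where
  "label_density y = RN_deriv marginal (label_part y)"

text \<open>The densities sum to one only almost everywhere; off that null set the conditional
  law is replaced by the uniform one, so that \<open>label_prob\<close> is a probability vector everywhere.\<close>
definition label_prob :: "'y \<Rightarrow> 'x \<Rightarrow> real" where
  "label_prob y x = (if (\<Sum>y'\<in>UNIV. label_density y' x) = 1 then enn2real (label_density y x)
                    else 1 / real CARD('y))"

lemma measurable_rho: "measurable \<rho> M = measurable (MX \<Otimes>\<^sub>M count_space UNIV) M"
  by (rule measurable_cong_sets[OF sets_rho refl])

lemma measurable_fst_rho: "fst \<in> measurable \<rho> MX"
  unfolding measurable_rho by (rule measurable_fst)

lemma borel_measurable_label_indicator: "(\<lambda>z. indicator {z. snd z = y} z :: ennreal) \<in> borel_measurable \<rho>"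
  unfolding measurable_rho by measurable

lemma prob_space_marginal: "prob_space marginal"
  unfolding marginal_def by (rule prob_space.prob_space_distr[OF prob_space_rho measurable_fst_rho])

lemma sets_marginal [simp]: "sets marginal = sets MX"
  unfolding marginal_def by simp

lemma sets_label_part [simp]: "sets (label_part y) = sets MX"
  unfolding label_part_def by simp

lemma measurable_marginal: "measurable marginal M = measurable MX M"
  by (rule measurable_cong_sets[OF sets_marginal refl])

lemma nn_integral_label_part:
  assumes F: "F \<in> borel_measurable MX"
  shows "integral\<^sup>N (label_part y) F = (\<integral>\<^sup>+z. indicator {z. snd z = y} z * F (fst z) \<partial>\<rho>)"
proof -
  have "fst \<in> measurable (density \<rho> (indicator {z. snd z = y})) MX"
    using measurable_fst_rho by simp
  then have "integral\<^sup>N (label_part y) F = (\<integral>\<^sup>+z. F (fst z) \<partial>density \<rho> (indicator {z. snd z = y}))"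
    unfolding label_part_def using F by (intro nn_integral_distr) simp_all
  also have "\<dots> = (\<integral>\<^sup>+z. indicator {z. snd z = y} z * F (fst z) \<partial>\<rho>)"
    using measurable_comp[OF measurable_fst_rho F]
    by (intro nn_integral_density borel_measurable_label_indicator) (simp add: comp_def)
  finally show ?thesis .
qed

lemma absolutely_continuous_label_part: "absolutely_continuous marginal (label_part y)"
  unfolding absolutely_continuous_def
proof
  fix A assume A: "A \<in> null_sets marginal"
  then have A_MX: "A \<in> sets MX" by (simp add: null_sets_def)
  have "emeasure \<rho> (fst -` A \<inter> space \<rho>) = emeasure marginal A"
    unfolding marginal_def by (rule emeasure_distr[OF measurable_fst_rho A_MX, symmetric])
  then have null: "emeasure \<rho> (fst -` A \<inter> space \<rho>) = 0" using A by auto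
  have "emeasure (label_part y) A = (\<integral>\<^sup>+z. indicator {z. snd z = y} z * indicator A (fst z) \<partial>\<rho>)"
    using nn_integral_label_part[of "indicator A" y] A_MX by (simp add: label_part_def)
  also have "\<dots> \<le> (\<integral>\<^sup>+z. indicator (fst -` A \<inter> space \<rho>) z \<partial>\<rho>)"
    by (intro nn_integral_mono) (auto simp: indicator_def)
  also have "\<dots> = 0" using null measurable_sets[OF measurable_fst_rho A_MX] by simp
  finally show "A \<in> null_sets (label_part y)" using A_MX by (simp add: null_sets_def label_part_def)
qed

lemma borel_measurable_label_density [measurable]: "label_density y \<in> borel_measurable MX"
  unfolding label_density_def
  using borel_measurable_RN_deriv[of marginal "label_part y"] unfolding measurable_marginal .

lemma nn_integral_label_density:
  assumes G: "G \<in> borel_measurable (MX \<Otimes>\<^sub>M count_space UNIV)"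
  shows "(\<integral>\<^sup>+z. G z \<partial>\<rho>) = (\<integral>\<^sup>+x. (\<Sum>y\<in>UNIV. label_density y x * G (x, y)) \<partial>marginal)"
proof -
  interpret marginal: prob_space marginal by (rule prob_space_marginal)
  have G_y: "(\<lambda>x. G (x, y)) \<in> borel_measurable MX" for y
    using G by measurable
  have "(\<integral>\<^sup>+z. G z \<partial>\<rho>) = (\<integral>\<^sup>+z. (\<Sum>y\<in>UNIV. indicator {z. snd z = y} z * G (fst z, y)) \<partial>\<rho>)"
    by (intro nn_integral_cong) (simp add: indicator_def if_distrib sum.If_cases)
  also have "\<dots> = (\<Sum>y\<in>UNIV. \<integral>\<^sup>+z. indicator {z. snd z = y} z * G (fst z, y) \<partial>\<rho>)"
    using measurable_comp[OF measurable_fst_rho G_y] borel_measurable_label_indicator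
    by (intro nn_integral_sum) (simp add: comp_def)
  also have "\<dots> = (\<Sum>y\<in>UNIV. integral\<^sup>N (label_part y) (\<lambda>x. G (x, y)))"
    using nn_integral_label_part[OF G_y] by simp
  also have "\<dots> = (\<Sum>y\<in>UNIV. \<integral>\<^sup>+x. label_density y x * G (x, y) \<partial>marginal)"
    unfolding label_density_def using G_y
    by (simp add: marginal.RN_deriv_nn_integral[OF absolutely_continuous_label_part] measurable_marginal)
  also have "\<dots> = (\<integral>\<^sup>+x. (\<Sum>y\<in>UNIV. label_density y x * G (x, y)) \<partial>marginal)"
    using G_y by (intro nn_integral_sum[symmetric]) (simp add: measurable_marginal)
  finally show ?thesis .
qed

lemma AE_sum_label_density: "AE x in marginal. (\<Sum>y\<in>UNIV. label_density y x) = 1"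
proof -
  interpret marginal: prob_space marginal by (rule prob_space_marginal)
  have "density marginal (\<lambda>x. \<Sum>y\<in>UNIV. label_density y x) = density marginal (\<lambda>x. 1)"
  proof (rule measure_eqI)
    fix A assume "A \<in> sets (density marginal (\<lambda>x. \<Sum>y\<in>UNIV. label_density y x))"
    then have A: "A \<in> sets MX" by simp
    have "emeasure (density marginal (\<lambda>x. \<Sum>y\<in>UNIV. label_density y x)) A
        = (\<integral>\<^sup>+x. (\<Sum>y\<in>UNIV. label_density y x * indicator A (fst (x, y))) \<partial>marginal)"
      using A by (subst emeasure_density) (simp_all add: measurable_marginal sum_distrib_right)
    also have "\<dots> = (\<integral>\<^sup>+z. indicator A (fst z) \<partial>\<rho>)"
      by (rule nn_integral_label_density[symmetric],
          rule measurable_compose[OF measurable_fst borel_measurable_indicator[OF A]])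
    also have "\<dots> = (\<integral>\<^sup>+z. indicator (fst -` A \<inter> space \<rho>) z \<partial>\<rho>)"
      by (intro nn_integral_cong) (auto simp: indicator_def)
    also have "\<dots> = emeasure marginal A"
      using measurable_sets[OF measurable_fst_rho A]
      by (simp add: marginal_def emeasure_distr[OF measurable_fst_rho A])
    finally show "emeasure (density marginal (\<lambda>x. \<Sum>y\<in>UNIV. label_density y x)) A
                = emeasure (density marginal (\<lambda>x. 1)) A" by (simp add: density_1)
  qed simp
  then show ?thesis
    using marginal.density_unique_iff[of "\<lambda>x. \<Sum>y\<in>UNIV. label_density y x" "\<lambda>x. 1"]
    by (simp add: measurable_marginal)
qed

lemma label_prob_nonneg: "0 \<le> label_prob y x"
  unfolding label_prob_def by simp

lemma sum_label_prob: "(\<Sum>y\<in>UNIV. label_prob y x) = 1"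
proof (cases "(\<Sum>y'\<in>UNIV. label_density y' x) = 1")
  case True
  then have "label_density y x < \<top>" for y
    using member_le_sum[of y UNIV "\<lambda>y. label_density y x"] by (simp add: order_le_less_trans)
  then have "(\<Sum>y\<in>UNIV. enn2real (label_density y x)) = enn2real (\<Sum>y\<in>UNIV. label_density y x)"
    using enn2real_sum[of UNIV "\<lambda>y. label_density y x"] by (simp add: comp_def)
  then show ?thesis using True by (simp add: label_prob_def)
qed (simp add: label_prob_def)

lemma borel_measurable_label_prob [measurable]: "label_prob y \<in> borel_measurable MX"
  unfolding label_prob_def[abs_def] by measurable

lemma AE_label_prob_eq_label_density: "AE x in marginal. \<forall>y. ennreal (label_prob y x) = label_density y x"
  using AE_sum_label_density
proof eventually_elim
  case (elim x)
  then have "label_density y x < \<top>" for y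
    using member_le_sum[of y UNIV "\<lambda>y. label_density y x"] by (simp add: order_le_less_trans)
  then show ?case using elim by (simp add: label_prob_def)
qed

lemma nn_integral_disintegration:
  assumes "G \<in> borel_measurable (MX \<Otimes>\<^sub>M count_space UNIV)"
  shows "(\<integral>\<^sup>+z. G z \<partial>\<rho>) = (\<integral>\<^sup>+x. (\<Sum>y\<in>UNIV. ennreal (label_prob y x) * G (x, y)) \<partial>marginal)"
  unfolding nn_integral_label_density[OF assms]
  using AE_label_prob_eq_label_density by (intro nn_integral_cong_AE) auto

lemma integral_disintegration:
  fixes H :: "'x \<times> 'y \<Rightarrow> real"
  assumes H: "H \<in> borel_measurable (MX \<Otimes>\<^sub>M count_space UNIV)"
    and H_nonneg: "\<And>z. 0 \<le> H z" and H_le: "\<And>z. H z \<le> B"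
  shows "integral\<^sup>L \<rho> H = (\<integral>x. (\<Sum>y\<in>UNIV. label_prob y x * H (x, y)) \<partial>marginal)"
proof -
  interpret rho: prob_space \<rho> by (rule prob_space_rho)
  interpret marginal: prob_space marginal by (rule prob_space_marginal)
  have cond_H_le: "(\<Sum>y\<in>UNIV. label_prob y x * H (x, y)) \<le> B" for x
  proof -
    have "(\<Sum>y\<in>UNIV. label_prob y x * H (x, y)) \<le> (\<Sum>y\<in>UNIV. label_prob y x * B)"
      by (intro sum_mono mult_left_mono H_le label_prob_nonneg)
    also have "\<dots> = B" by (simp add: sum_distrib_right[symmetric] sum_label_prob)
    finally show ?thesis .
  qed
  have cond_H_nonneg: "0 \<le> (\<Sum>y\<in>UNIV. label_prob y x * H (x, y))" for x
    by (intro sum_nonneg mult_nonneg_nonneg label_prob_nonneg H_nonneg)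
  have "integrable \<rho> H"
    using H H_nonneg H_le by (intro rho.integrable_const_bound[where B=B]) (auto simp: measurable_rho)
  then have "ennreal (integral\<^sup>L \<rho> H) = (\<integral>\<^sup>+z. ennreal (H z) \<partial>\<rho>)"
    using H_nonneg by (simp add: nn_integral_eq_integral)
  also have "\<dots> = (\<integral>\<^sup>+x. (\<Sum>y\<in>UNIV. ennreal (label_prob y x) * ennreal (H (x, y))) \<partial>marginal)"
    using H by (intro nn_integral_disintegration) measurable
  also have "\<dots> = (\<integral>\<^sup>+x. ennreal (\<Sum>y\<in>UNIV. label_prob y x * H (x, y)) \<partial>marginal)"
    using H_nonneg label_prob_nonneg
    by (intro nn_integral_cong) (simp add: ennreal_mult[symmetric] sum_nonneg)
  also have "\<dots> = ennreal (\<integral>x. (\<Sum>y\<in>UNIV. label_prob y x * H (x, y)) \<partial>marginal)"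
    using H cond_H_le cond_H_nonneg
    by (intro nn_integral_eq_integral marginal.integrable_const_bound[where B=B])
      (auto simp: measurable_marginal)
  finally show ?thesis
    using H_nonneg cond_H_nonneg by (subst (asm) ennreal_inj) (auto intro!: integral_nonneg_AE)
qed

end

section \<open>Calibration of the projection-based loss\<close>

lemma finite_minimizers_nonempty: "{y::'y::finite. \<forall>y'. (f y :: real) \<le> f y'} \<noteq> {}"
proof -
  have "Min (range f) \<in> range f" by (rule Min_in) auto
  then obtain y where "Min (range f) = f y" by blast
  moreover have "Min (range f) \<le> f y'" for y' by (rule Min_le) simp_all
  ultimately show ?thesis by auto
qed

lemma decode_eq_Min:
  fixes \<phi> :: "'y::{finite,linorder} \<Rightarrow> real ^ 'p"
  shows "decode \<phi> V b u = Min {y. \<forall>y'. \<phi> y \<bullet> (V *v u + b) \<le> \<phi> y' \<bullet> (V *v u + b)}"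
  unfolding decode_def using finite_minimizers_nonempty by (intro Least_Min) auto

lemma decode_le:
  fixes \<phi> :: "'y::{finite,linorder} \<Rightarrow> real ^ 'p"
  shows "\<phi> (decode \<phi> V b u) \<bullet> (V *v u + b) \<le> \<phi> y \<bullet> (V *v u + b)"
  using Min_in[OF finite finite_minimizers_nonempty[of "\<lambda>y. \<phi> y \<bullet> (V *v u + b)"]]
  unfolding decode_eq_Min by blast

lemma measurable_decode [measurable]:
  fixes \<phi> :: "'y::{finite,linorder} \<Rightarrow> real ^ 'p"
  shows "decode \<phi> V b \<in> borel \<rightarrow>\<^sub>M count_space UNIV"
proof (rule measurable_count_space_eq2_countable[THEN iffD2], intro conjI ballI)
  fix y :: 'y
  define P where "P y u \<longleftrightarrow> (\<forall>y'. \<phi> y \<bullet> (V *v u + b) \<le> \<phi> y' \<bullet> (V *v u + b))" for y u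
  have [measurable]: "(\<lambda>u. \<phi> y \<bullet> (V *v u + b)) \<in> borel_measurable borel" for y
    by (intro borel_measurable_continuous_onI continuous_intros)
  have [measurable]: "Measurable.pred borel (P y)" for y
    unfolding P_def by measurable
  have "decode \<phi> V b u = y \<longleftrightarrow> P y u \<and> (\<forall>y'. P y' u \<longrightarrow> y \<le> y')" for u
    using finite_minimizers_nonempty[of "\<lambda>y. \<phi> y \<bullet> (V *v u + b)"]
    by (simp add: decode_eq_Min Min_eq_iff P_def)
  then have "decode \<phi> V b -` {y} = {u. P y u \<and> (\<forall>y'. P y' u \<longrightarrow> y \<le> y')}" by auto
  also have "\<dots> \<in> sets borel" by measurable
  finally show "decode \<phi> V b -` {y} \<inter> space borel \<in> sets borel" by simp
qed simp

text \<open>Moving the score vector from \<open>m\<close> to \<open>u\<close> changes the score of each label by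
  \<open>(V\<^sup>T \<phi> y) \<bullet> (m - u)\<close>, which the dual norm bounds by \<open>\<sigma> N (u - m)\<close>.\<close>
lemma decode_regret_le:
  fixes \<phi> :: "'y::{finite,linorder} \<Rightarrow> real ^ 'p"
  assumes N: "is_norm N" and \<sigma>: "\<And>y. dual_norm N (transpose V *v \<phi> y) \<le> \<sigma>"
  shows "\<phi> (decode \<phi> V b u) \<bullet> (V *v m + b) - \<phi> (decode \<phi> V b m) \<bullet> (V *v m + b) \<le> 2 * \<sigma> * N (u - m)"
proof -
  let ?y = "decode \<phi> V b u" and ?y' = "decode \<phi> V b m"
  have shift: "\<phi> y \<bullet> (V *v m + b) = \<phi> y \<bullet> (V *v u + b) + (transpose V *v \<phi> y) \<bullet> (m - u)" for y
    by (simp add: dot_lmul_matrix matrix_vector_mult_diff_distrib inner_add_right inner_diff_right)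
  have "(transpose V *v \<phi> y) \<bullet> w \<le> \<sigma> * N w" for y w
    using inner_le_dual_norm[OF N] mult_right_mono[OF \<sigma> is_norm_nonneg[OF N]] by (rule order_trans)
  from this[of ?y "m - u"] this[of ?y' "u - m"]
  have "(transpose V *v \<phi> ?y) \<bullet> (m - u) - (transpose V *v \<phi> ?y') \<bullet> (m - u) \<le> 2 * \<sigma> * N (u - m)"
    using is_norm_minus_commute[OF N, of m u] by (simp add: inner_diff_right)
  then show ?thesis using decode_le[of \<phi> V b u ?y'] shift[of ?y] shift[of ?y'] by linarith
qed

lemma (in prob_space) square_expectation_le:
  fixes f :: "'a \<Rightarrow> real"
  assumes "integrable M f" "integrable M (\<lambda>x. (f x)\<^sup>2)"
  shows "(expectation f)\<^sup>2 \<le> expectation (\<lambda>x. (f x)\<^sup>2)"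
  using variance_eq[OF assms] variance_positive[of f] by simp

locale affine_decoding_setting =
  strongly_convex_conjugate \<Psi> N C \<beta> + label_disintegration MX \<rho>
  for \<Psi> :: "real ^ 'p \<Rightarrow> ereal" and N C \<beta> and MX :: "'x measure"
    and \<rho> :: "('x \<times> 'y::{finite,linorder}) measure" +
  fixes \<phi> :: "'y \<Rightarrow> real ^ 'p" and V :: "real ^ 'p ^ 'p" and b :: "real ^ 'p"
    and c :: "'y \<Rightarrow> real" and L :: "'y \<Rightarrow> 'y \<Rightarrow> real"
  assumes phi_in_C: "\<And>y. \<phi> y \<in> C"
    and L_nonneg: "\<And>y' y. 0 \<le> L y' y"
    and L_affine: "\<And>y' y. L y' y = \<phi> y' \<bullet> (V *v \<phi> y + b) + c y"
begin

definition cond_mean :: "'x \<Rightarrow> real ^ 'p" where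
  "cond_mean x = (\<Sum>y\<in>UNIV. label_prob y x *\<^sub>R \<phi> y)"

lemma cond_mean_in_C: "cond_mean x \<in> C"
  unfolding cond_mean_def
  by (rule convex_sum) (simp_all add: convex_C sum_label_prob label_prob_nonneg phi_in_C)

lemma borel_measurable_cond_mean [measurable]: "cond_mean \<in> borel_measurable MX"
  unfolding cond_mean_def by measurable

definition cond_risk :: "'x \<Rightarrow> 'y \<Rightarrow> real" where
  "cond_risk x y' = (\<Sum>y\<in>UNIV. label_prob y x * L y' y)"

lemma cond_risk_affine:
  "cond_risk x y' = \<phi> y' \<bullet> (V *v cond_mean x + b) + (\<Sum>y\<in>UNIV. label_prob y x * c y)"
proof -
  have "cond_risk x y' = (\<Sum>y\<in>UNIV. label_prob y x * (\<phi> y' \<bullet> (V *v \<phi> y)))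
      + (\<Sum>y\<in>UNIV. label_prob y x) * (\<phi> y' \<bullet> b) + (\<Sum>y\<in>UNIV. label_prob y x * c y)"
    unfolding cond_risk_def L_affine
    by (simp add: algebra_simps inner_add_right sum.distrib sum_distrib_right sum_distrib_left)
  also have "(\<Sum>y\<in>UNIV. label_prob y x * (\<phi> y' \<bullet> (V *v \<phi> y))) = \<phi> y' \<bullet> (V *v cond_mean x)"
    unfolding cond_mean_def by (simp add: vec.sum matrix_vector_mult_scaleR inner_sum_right)
  finally show ?thesis by (simp add: sum_label_prob inner_add_right)
qed

lemma cond_risk_nonneg: "0 \<le> cond_risk x y'"
  unfolding cond_risk_def by (intro sum_nonneg mult_nonneg_nonneg label_prob_nonneg L_nonneg)

definition loss_bound :: real where
  "loss_bound = Max (range (case_prod L))"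

lemma L_le_loss_bound: "L y' y \<le> loss_bound"
  unfolding loss_bound_def using rangeI[of "case_prod L" "(y', y)"] by (intro Max_ge) auto

lemma cond_risk_le_loss_bound: "cond_risk x y' \<le> loss_bound"
proof -
  have "cond_risk x y' \<le> (\<Sum>y\<in>UNIV. label_prob y x * loss_bound)"
    unfolding cond_risk_def by (intro sum_mono mult_left_mono L_le_loss_bound label_prob_nonneg)
  then show ?thesis by (simp add: sum_distrib_right[symmetric] sum_label_prob)
qed

lemma borel_measurable_cond_risk [measurable]:
  assumes [measurable]: "f \<in> MX \<rightarrow>\<^sub>M count_space UNIV"
  shows "(\<lambda>x. cond_risk x (f x)) \<in> borel_measurable MX"
  unfolding cond_risk_def by measurable

lemma integrable_cond_risk:
  assumes "f \<in> MX \<rightarrow>\<^sub>M count_space UNIV"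
  shows "integrable marginal (\<lambda>x. cond_risk x (f x))"
proof -
  interpret marginal: prob_space marginal by (rule prob_space_marginal)
  show ?thesis
    using assms cond_risk_nonneg cond_risk_le_loss_bound
    by (intro marginal.integrable_const_bound[where B = loss_bound])
      (auto simp: measurable_marginal)
qed

lemma target_risk_eq:
  assumes [measurable]: "f \<in> MX \<rightarrow>\<^sub>M count_space UNIV"
  shows "target_risk \<rho> L f = (\<integral>x. cond_risk x (f x) \<partial>marginal)"
proof -
  have "(\<lambda>z. L (f (fst z)) (snd z)) \<in> borel_measurable (MX \<Otimes>\<^sub>M count_space UNIV)"
    by measurable
  from integral_disintegration[OF this, of loss_bound] show ?thesis
    unfolding target_risk_def cond_risk_def by (simp add: L_nonneg L_le_loss_bound)
qed

definition bayes_decoder :: "'x \<Rightarrow> 'y" where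
  "bayes_decoder x = decode \<phi> V b (cond_mean x)"

lemma cond_risk_bayes_decoder_le: "cond_risk x (bayes_decoder x) \<le> cond_risk x y'"
  unfolding cond_risk_affine bayes_decoder_def using decode_le by simp

lemma measurable_bayes_decoder [measurable]: "bayes_decoder \<in> MX \<rightarrow>\<^sub>M count_space UNIV"
  unfolding bayes_decoder_def[abs_def] by measurable

lemma INF_target_risk:
  "(INF f\<in>MX \<rightarrow>\<^sub>M count_space UNIV. target_risk \<rho> L f) = target_risk \<rho> L bayes_decoder"
proof (rule antisym)
  have "0 \<le> target_risk \<rho> L f" for f
    unfolding target_risk_def by (intro integral_nonneg_AE) (simp add: L_nonneg)
  then show "(INF f\<in>MX \<rightarrow>\<^sub>M count_space UNIV. target_risk \<rho> L f) \<le> target_risk \<rho> L bayes_decoder"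
    by (rule cINF_lower[OF bdd_belowI2 measurable_bayes_decoder])
  show "target_risk \<rho> L bayes_decoder \<le> (INF f\<in>MX \<rightarrow>\<^sub>M count_space UNIV. target_risk \<rho> L f)"
  proof (rule cINF_greatest)
    show "MX \<rightarrow>\<^sub>M count_space (UNIV :: 'y set) \<noteq> {}" using measurable_bayes_decoder by blast
    fix f :: "'x \<Rightarrow> 'y" assume f: "f \<in> MX \<rightarrow>\<^sub>M count_space UNIV"
    show "target_risk \<rho> L bayes_decoder \<le> target_risk \<rho> L f"
      unfolding target_risk_eq[OF measurable_bayes_decoder] target_risk_eq[OF f]
      using integrable_cond_risk[OF measurable_bayes_decoder] integrable_cond_risk[OF f]
      by (rule integral_mono) (rule cond_risk_bayes_decoder_le)
  qed
qed

definition regret :: "'x \<Rightarrow> 'y \<Rightarrow> real" where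
  "regret x y' = cond_risk x y' - cond_risk x (bayes_decoder x)"

lemma regret_nonneg: "0 \<le> regret x y'"
  using cond_risk_bayes_decoder_le by (simp add: regret_def)

lemma regret_le_loss_bound: "regret x y' \<le> loss_bound"
  using cond_risk_le_loss_bound[of x y'] cond_risk_nonneg[of x "bayes_decoder x"]
  unfolding regret_def by linarith

lemma borel_measurable_regret [measurable]:
  assumes [measurable]: "f \<in> MX \<rightarrow>\<^sub>M count_space UNIV"
  shows "(\<lambda>x. regret x (f x)) \<in> borel_measurable MX"
  unfolding regret_def by measurable

lemma integrable_regret_power:
  assumes [measurable]: "f \<in> MX \<rightarrow>\<^sub>M count_space UNIV"
  shows "integrable marginal (\<lambda>x. (regret x (f x)) ^ n)"
proof -
  interpret marginal: prob_space marginal by (rule prob_space_marginal)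
  have "(regret x (f x)) ^ n \<le> loss_bound ^ n" for x
    using regret_nonneg regret_le_loss_bound by (intro power_mono)
  then show ?thesis using regret_nonneg
    by (intro marginal.integrable_const_bound[where B = "loss_bound ^ n"])
      (auto simp: measurable_marginal)
qed

lemma excess_target_risk_eq:
  assumes f: "f \<in> MX \<rightarrow>\<^sub>M count_space UNIV"
  shows "excess_target_risk MX \<rho> L f = (\<integral>x. regret x (f x) \<partial>marginal)"
  unfolding excess_target_risk_def INF_target_risk target_risk_eq[OF f]
    target_risk_eq[OF measurable_bayes_decoder] regret_def
  using integrable_cond_risk[OF f] integrable_cond_risk[OF measurable_bayes_decoder]
  by (rule Bochner_Integration.integral_diff[symmetric])

lemma excess_target_risk_sq_le:
  assumes f: "f \<in> MX \<rightarrow>\<^sub>M count_space UNIV"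
  shows "(excess_target_risk MX \<rho> L f)\<^sup>2 \<le> (\<integral>x. (regret x (f x))\<^sup>2 \<partial>marginal)"
  using prob_space.square_expectation_le[OF prob_space_marginal
      integrable_regret_power[OF f, of 1, simplified] integrable_regret_power[OF f, of 2]]
  by (simp add: excess_target_risk_eq[OF f])

lemma proj_loss_eq: "proj_loss \<Psi> C \<phi> \<theta> y = ereal (conjugate \<theta> + psi (\<phi> y) - \<theta> \<bullet> \<phi> y)"
  unfolding proj_loss_def Omega_conj_eq_conjugate Omega_def using Psi_eq_psi[OF phi_in_C] phi_in_C
  by simp

definition surrogate_gap :: "real ^ 'p \<Rightarrow> 'x \<Rightarrow> real" where
  "surrogate_gap \<theta> x = conjugate \<theta> - conj_obj \<theta> (cond_mean x)"

definition jensen_gap :: "'x \<Rightarrow> real" where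
  "jensen_gap x = (\<Sum>y\<in>UNIV. label_prob y x * psi (\<phi> y)) - psi (cond_mean x)"

lemma surrogate_gap_nonneg: "0 \<le> surrogate_gap \<theta> x"
  using conj_obj_le_conjugate[OF cond_mean_in_C] by (simp add: surrogate_gap_def)

lemma jensen_gap_nonneg: "0 \<le> jensen_gap x"
proof -
  have "psi (\<Sum>y\<in>UNIV. label_prob y x *\<^sub>R \<phi> y) \<le> (\<Sum>y\<in>UNIV. label_prob y x * psi (\<phi> y))"
    by (rule convex_on_sum[OF finite UNIV_not_empty convex_on_psi])
      (simp_all add: sum_label_prob label_prob_nonneg phi_in_C)
  then show ?thesis by (simp add: jensen_gap_def cond_mean_def)
qed

lemma expected_proj_loss_eq:
  "(\<Sum>y\<in>UNIV. label_prob y x * (conjugate \<theta> + psi (\<phi> y) - \<theta> \<bullet> \<phi> y)) = surrogate_gap \<theta> x + jensen_gap x"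
proof -
  have "(\<Sum>y\<in>UNIV. label_prob y x * (\<theta> \<bullet> \<phi> y)) = \<theta> \<bullet> cond_mean x"
    unfolding cond_mean_def by (simp add: inner_sum_right)
  then show ?thesis
    unfolding surrogate_gap_def jensen_gap_def conj_obj_def
    by (simp add: algebra_simps sum.distrib sum_subtractf sum_distrib_left[symmetric]
        sum_distrib_right[symmetric] sum_label_prob inner_commute)
qed

lemma borel_measurable_conjugate [measurable]: "conjugate \<in> borel_measurable borel"
  by (rule borel_measurable_continuous_onI[OF continuous_on_conjugate])

lemma borel_measurable_conj_argmax [measurable]: "conj_argmax \<in> borel_measurable borel"
  by (rule borel_measurable_continuous_onI[OF continuous_on_conj_argmax])

lemma borel_measurable_psi_cond_mean [measurable]: "(\<lambda>x. psi (cond_mean x)) \<in> borel_measurable MX"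
  by (rule borel_measurable_psi_comp[OF borel_measurable_cond_mean cond_mean_in_C])

lemma surrogate_risk_eq:
  assumes [measurable]: "g \<in> borel_measurable MX"
  shows "surrogate_risk \<rho> \<Psi> C \<phi> g
           = (\<integral>\<^sup>+x. surrogate_gap (g x) x \<partial>marginal) + (\<integral>\<^sup>+x. jensen_gap x \<partial>marginal)"
proof -
  have loss_nonneg: "0 \<le> conjugate \<theta> + psi (\<phi> y) - \<theta> \<bullet> \<phi> y" for \<theta> y
    using conj_obj_le_conjugate[OF phi_in_C[of y], of \<theta>] by (simp add: conj_obj_def inner_commute)
  have "surrogate_risk \<rho> \<Psi> C \<phi> g
      = (\<integral>\<^sup>+z. ennreal (conjugate (g (fst z)) + psi (\<phi> (snd z)) - g (fst z) \<bullet> \<phi> (snd z)) \<partial>\<rho>)"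
    unfolding surrogate_risk_def proj_loss_eq by simp
  also have "\<dots> = (\<integral>\<^sup>+x. (\<Sum>y\<in>UNIV. ennreal (label_prob y x)
                      * ennreal (conjugate (g x) + psi (\<phi> y) - g x \<bullet> \<phi> y)) \<partial>marginal)"
  proof -
    have "(\<lambda>z. ennreal (conjugate (g (fst z)) + psi (\<phi> (snd z)) - g (fst z) \<bullet> \<phi> (snd z)))
        \<in> borel_measurable (MX \<Otimes>\<^sub>M count_space UNIV)" by measurable
    from nn_integral_disintegration[OF this] show ?thesis by simp
  qed
  also have "\<dots> = (\<integral>\<^sup>+x. ennreal (surrogate_gap (g x) x) + ennreal (jensen_gap x) \<partial>marginal)"
    using loss_nonneg label_prob_nonneg surrogate_gap_nonneg jensen_gap_nonneg
    by (intro nn_integral_cong)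
      (simp add: ennreal_mult[symmetric] sum_nonneg expected_proj_loss_eq flip: ennreal_plus)
  also have "\<dots> = (\<integral>\<^sup>+x. surrogate_gap (g x) x \<partial>marginal) + (\<integral>\<^sup>+x. jensen_gap x \<partial>marginal)"
    unfolding surrogate_gap_def jensen_gap_def conj_obj_def
    by (rule nn_integral_add) (simp_all add: measurable_marginal)
  finally show ?thesis .
qed

lemma jensen_gap_bounded: obtains B where "\<And>x. jensen_gap x \<le> B"
proof -
  obtain K \<theta>\<^sub>0 where K: "\<And>u. u \<in> C \<Longrightarrow> K + u \<bullet> \<theta>\<^sub>0 \<le> psi u" using psi_affine_minorant by blast
  define h where "h y = psi (\<phi> y) - K - \<phi> y \<bullet> \<theta>\<^sub>0" for y
  have "jensen_gap x \<le> Max (range h)" for x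
  proof -
    have "jensen_gap x = (\<Sum>y\<in>UNIV. label_prob y x * h y) - (psi (cond_mean x) - K - cond_mean x \<bullet> \<theta>\<^sub>0)"
      unfolding jensen_gap_def h_def cond_mean_def
      by (simp add: algebra_simps sum.distrib sum_subtractf sum_distrib_left[symmetric]
          sum_distrib_right[symmetric] sum_label_prob inner_sum_left)
    also have "\<dots> \<le> (\<Sum>y\<in>UNIV. label_prob y x * h y)"
      using K[OF cond_mean_in_C, of x] by simp
    also have "\<dots> \<le> (\<Sum>y\<in>UNIV. label_prob y x * Max (range h))"
      by (intro sum_mono mult_left_mono label_prob_nonneg Max_ge) auto
    also have "\<dots> = Max (range h)" by (simp add: sum_distrib_right[symmetric] sum_label_prob)
    finally show ?thesis .
  qed
  then show ?thesis using that by blast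
qed

lemma nn_integral_jensen_gap_finite: "(\<integral>\<^sup>+x. jensen_gap x \<partial>marginal) \<noteq> \<infinity>"
proof -
  interpret marginal: prob_space marginal by (rule prob_space_marginal)
  obtain B where "\<And>x. jensen_gap x \<le> B" using jensen_gap_bounded by blast
  then have "(\<integral>\<^sup>+x. jensen_gap x \<partial>marginal) \<le> (\<integral>\<^sup>+x. B \<partial>marginal)"
    by (intro nn_integral_mono ennreal_leI)
  also have "\<dots> = ennreal B" by (simp add: marginal.emeasure_space_1)
  finally show ?thesis using ennreal_less_top[of B] by (auto simp: top_unique)
qed

text \<open>An exact maximiser of \<open>conj_obj \<theta>\<close> at the conditional mean need not exist when the
  mean lies on the boundary of \<open>C\<close>; approximate ones do, and can be picked measurably from a
  countable dense set of slopes.\<close>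
lemma surrogate_gap_uniformly_small:
  assumes e: "e > 0"
  obtains g where "g \<in> borel_measurable MX" "\<And>x. surrogate_gap (g x) x < e"
proof -
  obtain D :: "(real ^ 'p) set" where D: "countable D" "\<And>X. open X \<Longrightarrow> X \<noteq> {} \<Longrightarrow> \<exists>d\<in>D. d \<in> X"
    using countable_dense_setE by blast
  define \<theta> where "\<theta> = from_nat_into D"
  have "\<exists>n. surrogate_gap (\<theta> n) x < e" for x
  proof -
    obtain \<theta>\<^sub>0 where "\<And>u. u \<in> C \<Longrightarrow> conj_obj \<theta>\<^sub>0 u \<le> conj_obj \<theta>\<^sub>0 (cond_mean x) + e / 2"
      using approx_subgradient_exists[OF cond_mean_in_C[of x], of "e / 2"] e by auto
    then have "surrogate_gap \<theta>\<^sub>0 x < e"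
      using conj_argmax_in_C[of \<theta>\<^sub>0] e by (fastforce simp: surrogate_gap_def conjugate_def)
    moreover have "open {\<theta>'. surrogate_gap \<theta>' x < e}"
      unfolding surrogate_gap_def conj_obj_def
      by (intro open_Collect_less continuous_intros continuous_on_conjugate)
    ultimately obtain d where "d \<in> D" "surrogate_gap d x < e" using D(2) by blast
    then show ?thesis using from_nat_into_surj[OF D(1)] unfolding \<theta>_def by metis
  qed
  then have "surrogate_gap (\<theta> (LEAST n. surrogate_gap (\<theta> n) x < e)) x < e" for x
    by (rule LeastI_ex)
  moreover have "(\<lambda>x. \<theta> (LEAST n. surrogate_gap (\<theta> n) x < e)) \<in> borel_measurable MX"
  proof -
    have "(\<lambda>x. LEAST n. surrogate_gap (\<theta> n) x < e) \<in> MX \<rightarrow>\<^sub>M count_space UNIV"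
      unfolding surrogate_gap_def conj_obj_def by measurable
    then show ?thesis by (rule measurable_compose) simp
  qed
  ultimately show ?thesis using that by blast
qed

lemma INF_surrogate_risk:
  "(INF g\<in>borel_measurable MX. surrogate_risk \<rho> \<Psi> C \<phi> g) = (\<integral>\<^sup>+x. jensen_gap x \<partial>marginal)"
proof (rule antisym)
  interpret marginal: prob_space marginal by (rule prob_space_marginal)
  show "(INF g\<in>borel_measurable MX. surrogate_risk \<rho> \<Psi> C \<phi> g) \<le> (\<integral>\<^sup>+x. jensen_gap x \<partial>marginal)"
  proof (rule ennreal_le_epsilon)
    fix e :: real assume "0 < e"
    then obtain g where g: "g \<in> borel_measurable MX" "\<And>x. surrogate_gap (g x) x < e"
      using surrogate_gap_uniformly_small by blast
    have "(INF g\<in>borel_measurable MX. surrogate_risk \<rho> \<Psi> C \<phi> g) \<le> surrogate_risk \<rho> \<Psi> C \<phi> g"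
      by (rule INF_lower[OF g(1)])
    also have "\<dots> = (\<integral>\<^sup>+x. surrogate_gap (g x) x \<partial>marginal) + (\<integral>\<^sup>+x. jensen_gap x \<partial>marginal)"
      by (rule surrogate_risk_eq[OF g(1)])
    also have "(\<integral>\<^sup>+x. surrogate_gap (g x) x \<partial>marginal) \<le> (\<integral>\<^sup>+x. e \<partial>marginal)"
      using g(2) by (intro nn_integral_mono ennreal_leI less_imp_le)
    also have "(\<integral>\<^sup>+x. e \<partial>marginal) = ennreal e" by (simp add: marginal.emeasure_space_1)
    finally show "(INF g\<in>borel_measurable MX. surrogate_risk \<rho> \<Psi> C \<phi> g)
                    \<le> (\<integral>\<^sup>+x. jensen_gap x \<partial>marginal) + ennreal e"
      by (simp add: add.commute)
  qed
  show "(\<integral>\<^sup>+x. jensen_gap x \<partial>marginal) \<le> (INF g\<in>borel_measurable MX. surrogate_risk \<rho> \<Psi> C \<phi> g)"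
  proof (rule INF_greatest)
    fix g :: "'x \<Rightarrow> real ^ 'p" assume "g \<in> borel_measurable MX"
    show "(\<integral>\<^sup>+x. jensen_gap x \<partial>marginal) \<le> surrogate_risk \<rho> \<Psi> C \<phi> g"
      unfolding surrogate_risk_eq[OF \<open>g \<in> _\<close>] by (rule add_increasing[OF zero_le order_refl])
  qed
qed

lemma excess_surrogate_risk_eq:
  assumes "g \<in> borel_measurable MX"
  shows "excess_surrogate_risk MX \<rho> \<Psi> C \<phi> g = (\<integral>\<^sup>+x. surrogate_gap (g x) x \<partial>marginal)"
  unfolding excess_surrogate_risk_def INF_surrogate_risk surrogate_risk_eq[OF assms]
  using nn_integral_jensen_gap_finite by simp

lemma regret_sq_le_surrogate_gap:
  assumes \<sigma>: "\<sigma> > 0" "\<And>y. dual_norm N (transpose V *v \<phi> y) \<le> \<sigma>"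
  shows "(regret x (decode \<phi> V b (conj_argmax \<theta>)))\<^sup>2 / (8 * \<beta> * \<sigma>\<^sup>2) \<le> surrogate_gap \<theta> x"
proof -
  let ?u = "conj_argmax \<theta>" and ?m = "cond_mean x"
  have "regret x (decode \<phi> V b ?u) \<le> 2 * \<sigma> * N (?u - ?m)"
    using decode_regret_le[OF norm \<sigma>(2), where b = b and u = ?u and m = ?m]
    unfolding regret_def cond_risk_affine bayes_decoder_def by simp
  then have "(regret x (decode \<phi> V b ?u))\<^sup>2 / (8 * \<beta> * \<sigma>\<^sup>2) \<le> (2 * \<sigma> * N (?u - ?m))\<^sup>2 / (8 * \<beta> * \<sigma>\<^sup>2)"
    using \<sigma>(1) beta_pos regret_nonneg by (intro divide_right_mono power_mono) auto
  also have "\<dots> = (N (?m - ?u))\<^sup>2 / (2 * \<beta>)"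
    using \<sigma>(1) beta_pos is_norm_minus_commute[OF norm, of ?m ?u]
    by (simp add: field_simps power2_eq_square)
  also have "\<dots> \<le> surrogate_gap \<theta> x"
    using conj_obj_quadratic_growth[OF cond_mean_in_C[of x], of \<theta>] by (simp add: surrogate_gap_def)
  finally show ?thesis .
qed

theorem excess_target_risk_sq_le_excess_surrogate_risk:
  assumes g [measurable]: "g \<in> borel_measurable MX"
    and \<sigma>: "\<sigma> > 0" "\<And>y. dual_norm N (transpose V *v \<phi> y) \<le> \<sigma>"
  shows "ennreal ((excess_target_risk MX \<rho> L (decode \<phi> V b \<circ> conj_argmax \<circ> g))\<^sup>2 / (8 * \<beta> * \<sigma>\<^sup>2))
           \<le> excess_surrogate_risk MX \<rho> \<Psi> C \<phi> g"
proof -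
  define f where "f = decode \<phi> V b \<circ> conj_argmax \<circ> g"
  have f [measurable]: "f \<in> MX \<rightarrow>\<^sub>M count_space UNIV" unfolding f_def by measurable
  have "(excess_target_risk MX \<rho> L f)\<^sup>2 / (8 * \<beta> * \<sigma>\<^sup>2)
      \<le> (\<integral>x. (regret x (f x))\<^sup>2 \<partial>marginal) / (8 * \<beta> * \<sigma>\<^sup>2)"
    using excess_target_risk_sq_le[OF f] \<sigma>(1) beta_pos by (simp add: divide_right_mono)
  also have "\<dots> = (\<integral>x. (regret x (f x))\<^sup>2 / (8 * \<beta> * \<sigma>\<^sup>2) \<partial>marginal)" by simp
  finally have "ennreal ((excess_target_risk MX \<rho> L f)\<^sup>2 / (8 * \<beta> * \<sigma>\<^sup>2))
      \<le> ennreal (\<integral>x. (regret x (f x))\<^sup>2 / (8 * \<beta> * \<sigma>\<^sup>2) \<partial>marginal)"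
    by (rule ennreal_leI)
  also have "\<dots> = (\<integral>\<^sup>+x. (regret x (f x))\<^sup>2 / (8 * \<beta> * \<sigma>\<^sup>2) \<partial>marginal)"
    using integrable_regret_power[OF f, of 2] \<sigma>(1) beta_pos
    by (intro nn_integral_eq_integral[symmetric]) auto
  also have "\<dots> \<le> (\<integral>\<^sup>+x. surrogate_gap (g x) x \<partial>marginal)"
    using regret_sq_le_surrogate_gap[OF \<sigma>] by (intro nn_integral_mono ennreal_leI) (simp add: f_def)
  also have "\<dots> = excess_surrogate_risk MX \<rho> \<Psi> C \<phi> g"
    by (rule excess_surrogate_risk_eq[OF g, symmetric])
  finally show ?thesis unfolding f_def .
qed

end

theorem proposition5:
  fixes MX :: "'x measure"
    and \<rho> :: "('x \<times> 'y::{finite,linorder}) measure"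
    and \<phi> :: "'y \<Rightarrow> real ^ 'p"
    and L :: "'y \<Rightarrow> 'y \<Rightarrow> real"
    and V :: "real ^ 'p ^ 'p" and b :: "real ^ 'p" and c :: "'y \<Rightarrow> real"
    and \<Psi> :: "real ^ 'p \<Rightarrow> ereal"
    and N :: "real ^ 'p \<Rightarrow> real"
    and C :: "(real ^ 'p) set"
    and \<beta> :: real
    and g :: "'x \<Rightarrow> real ^ 'p"
  assumes rho: "prob_space \<rho>" "sets \<rho> = sets (MX \<Otimes>\<^sub>M count_space UNIV)"
    and L_nonneg: "\<And>y' y. 0 \<le> L y' y"
    and L_affine: "\<And>y' y. L y' y = \<phi> y' \<bullet> (V *v \<phi> y + b) + c y"
    and legendre: "legendre_type \<Psi>"
    and norm: "is_norm N"
    and beta: "\<beta> > 0"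
    and strong: "strongly_convex_over \<beta> N C \<Psi>"
    and C: "closed C" "convex C" "range \<phi> \<subseteq> C" "C \<subseteq> edom \<Psi>"
    and sigma: "(SUP y. dual_norm N (transpose V *v \<phi> y)) > 0"
    and g: "g \<in> borel_measurable MX"
  shows "ennreal ((excess_target_risk MX \<rho> L (decode \<phi> V b \<circ> proj_layer \<Psi> C \<circ> g))\<^sup>2
            / (8 * \<beta> * (SUP y. dual_norm N (transpose V *v \<phi> y))\<^sup>2))
         \<le> excess_surrogate_risk MX \<rho> \<Psi> C \<phi> g"
proof -
  have "proper_closed_convex \<Psi>" using legendre by (simp add: legendre_type_def)
  then interpret affine_decoding_setting \<Psi> N C \<beta> MX \<rho> \<phi> V b c L
    using norm beta strong C rho L_nonneg L_affine
    by (intro affine_decoding_setting.intro strongly_convex_conjugate.intro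
        label_disintegration.intro affine_decoding_setting_axioms.intro)
      (auto simp: proper_closed_convex_def)
  have "dual_norm N (transpose V *v \<phi> y) \<le> (SUP y. dual_norm N (transpose V *v \<phi> y))" for y
    by (rule cSUP_upper) simp_all
  from excess_target_risk_sq_le_excess_surrogate_risk[OF g sigma this]
  show ?thesis by (simp add: comp_def proj_layer_eq_conj_argmax)
qed

end
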